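(* Let $F:\mathbb{R}^n\to\mathbb{R}$ be $C^3$ with $\nabla F$ and $\nabla^2F$ globally Lipschitz continuous. Let $\xi:\mathbb{R}\to\mathbb{R}^n$ be a continuous (hence bounded) periodic exploration signal with period $T>0$ satisfying $$\frac1T\int_t^{t+T}\xi(\tau)\xi(\tau)^{\top}\,d\tau=I\quad\text{for all } t,$$ where $I$ is the $n\times n$ identity matrix. For $\epsilon>0$ define $\beta(t,x):=-\hat\nabla F(x;\xi(t),\epsilon)=-\frac{1}{2\epsilon}\xi(t)\big[F(x+\epsilon\xi(t))-F(x-\epsilon\xi(t))\big]$. Let $\alpha>0$, let $K\in\mathbb{N}$, and let $\{x(t):KT\le t\le (K+1)T\}$ be the solution of the ODE $\dot x(t)=\alpha\,\beta(t,x(t))$ with initial condition $x(KT)=x$. Let $\mathcal{X}\subseteq\mathbb{R}^n$ be a nonempty closed convex set with Euclidean projection $\mathrm{Proj}_{\mathcal X}$, and define $$x^{+}:=\mathrm{Proj}_{\mathcal X}\Big\{x+\alpha\int_{KT}^{(K+1)T}\beta(\tau,x(\tau))\,d\tau\Big\}.$$ Then $x^{+}$ admits the representation $$x^{+}=\mathrm{Proj}_{\mathcal X}\big\{x-\alpha T\,(\nabla F(x)+s_K(x))\big\},$$ where $s_K(x)=O(\alpha+\epsilon^2)$: for every $R>0$ and $\alpha_0>0$ there is a constant $C$ (depending on $R,\alpha_0,T,F,\xi$ but not on $K$, $\alpha$, or $\epsilon\in(0,1]$) such that $\|s_K(x)\|_2\le C(\alpha+\epsilon^2)$ whenever $\|x\|_2\le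 R$, $0<\alpha\le\alpha_0$, $0<\epsilon\le 1$. *)

theory Defs
  imports "HOL-Analysis.Analysis"
begin

definition outer :: "real^'n \<Rightarrow> real^'n \<Rightarrow> real^'n^'n" where
  "outer u v = (\<chi> i j. u $ i * v $ j)"

definition efd_beta :: "(real^'n \<Rightarrow> real) \<Rightarrow> (real \<Rightarrow> real^'n) \<Rightarrow> real \<Rightarrow> real \<Rightarrow> real^'n \<Rightarrow> real^'n" where
  "efd_beta F \<xi> \<epsilon> t x =
     - ((1 / (2 * \<epsilon>)) * (F (x + \<epsilon> *\<^sub>R \<xi> t) - F (x - \<epsilon> *\<^sub>R \<xi> t))) *\<^sub>R \<xi> t"

end

theory Submission
  imports Defs
begin

text \<open>
  Over one period the flow moves x only by O(\<alpha>): the estimate \<beta> grows at most affinely in its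
  state argument, so a Gronwall bound keeps the trajectory, and hence its velocity, bounded.
  As \<beta>(t, y) is Lipschitz in y uniformly in \<epsilon>, the integral of \<beta> along the trajectory differs
  from that of \<beta>(t, x) by O(\<alpha>). Taylor's formula with a Lipschitz Hessian shows that the
  central difference \<beta>(t, x) equals -(\<nabla>F(x) \<cdot> \<xi>(t)) \<xi>(t) up to O(\<epsilon>^2), and persistency of
  excitation turns the integral of (\<nabla>F(x) \<cdot> \<xi>) \<xi> over a period into T \<nabla>F(x). Being continuous
  and periodic, \<xi> is bounded, which makes all constants independent of K.
\<close>

section \<open>Solutions of differential inequalities\<close>

lemma exp_bound_of_differential_inequality:
  fixes w :: "real \<Rightarrow> real"
  assumes t: "t \<in> {a..b}"
    and deriv: "\<And>s. s \<in> {a..b} \<Longrightarrow> (w has_real_derivative w' s) (at s within {a..b})"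
    and ineq: "\<And>s. s \<in> {a..b} \<Longrightarrow> w' s \<le> k * w s"
  shows "w t \<le> exp (k * (t - a)) * w a"
proof -
  define \<phi> where "\<phi> s = exp (- k * (s - a)) * w s" for s
  define \<phi>' where "\<phi>' s = exp (- k * (s - a)) * (w' s - k * w s)" for s
  have "(\<phi> has_real_derivative \<phi>' s) (at s within {a..t})" if "s \<in> {a..t}" for s
  proof -
    have "(w has_real_derivative w' s) (at s within {a..t})"
      using deriv[of s] that t by (auto intro: DERIV_subset)
    then show ?thesis
      unfolding \<phi>_def \<phi>'_def by (auto intro!: derivative_eq_intros simp: algebra_simps)
  qed
  then obtain z where z: "z \<in> {a..t}" "\<phi> t - \<phi> a = \<phi>' z * (t - a)"
    using mvt_very_simple[of a t \<phi> "\<lambda>z. (*) (\<phi>' z)"] t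
    by (auto simp: has_field_derivative_def)
  have "\<phi>' z \<le> 0"
    using ineq[of z] z t by (auto simp: \<phi>'_def mult_nonneg_nonpos)
  with z have "\<phi> t \<le> \<phi> a"
    using mult_nonpos_nonneg[of "\<phi>' z" "t - a"] by auto
  then have "exp (- k * (t - a)) * w t \<le> w a"
    by (simp add: \<phi>_def)
  then have "exp (k * (t - a)) * (exp (- k * (t - a)) * w t) \<le> exp (k * (t - a)) * w a"
    by simp
  then show ?thesis
    by (simp add: mult.assoc[symmetric] flip: exp_add)
qed

context
  fixes x x' :: "real \<Rightarrow> 'a::real_inner" and a b A B :: real
  assumes deriv: "\<And>s. s \<in> {a..b} \<Longrightarrow> (x has_vector_derivative x' s) (at s within {a..b})"
    and growth: "\<And>s. s \<in> {a..b} \<Longrightarrow> norm (x' s) \<le> A + B * norm (x s)"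
    and A: "0 \<le> A" and B: "0 \<le> B"
begin

lemma norm_le_of_linear_growth:
  assumes t: "t \<in> {a..b}"
  shows "norm (x t) \<le> (1 + (norm (x a))\<^sup>2) * exp ((A + 2 * B) * (t - a))"
proof -
  \<comment> \<open>Unlike norm (x s), this w is differentiable everywhere.\<close>
  define w where "w s = 1 + x s \<bullet> x s" for s
  have two_mult_le: "2 * r \<le> 1 + r\<^sup>2" for r :: real
    using zero_le_power2[of "r - 1"] by (simp add: power2_diff)
  have le_one_plus_sq: "r \<le> 1 + r\<^sup>2" for r :: real
    using two_mult_le[of r] zero_le_power2[of r] by linarith
  have "w t \<le> exp ((A + 2 * B) * (t - a)) * w a"
  proof (rule exp_bound_of_differential_inequality[OF t])
    fix s assume s: "s \<in> {a..b}"
    show "(w has_real_derivative 2 * (x s \<bullet> x' s)) (at s within {a..b})"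
      using deriv[OF s] unfolding w_def has_vector_derivative_def has_field_derivative_def
      by (auto intro!: derivative_eq_intros simp: inner_commute algebra_simps)
    have "2 * (x s \<bullet> x' s) \<le> 2 * (norm (x s) * (A + B * norm (x s)))"
      using norm_cauchy_schwarz[of "x s" "x' s"] growth[OF s]
      by (meson mult_left_mono norm_ge_zero order_trans mult_le_cancel_left_pos zero_less_numeral)
    also have "\<dots> = A * (2 * norm (x s)) + 2 * B * (norm (x s))\<^sup>2"
      by (simp add: algebra_simps power2_eq_square)
    also have "\<dots> \<le> A * (1 + (norm (x s))\<^sup>2) + 2 * B * (1 + (norm (x s))\<^sup>2)"
      using A B two_mult_le by (intro add_mono mult_left_mono) auto
    also have "\<dots> = (A + 2 * B) * w s"
      by (simp add: w_def power2_norm_eq_inner algebra_simps)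
    finally show "2 * (x s \<bullet> x' s) \<le> (A + 2 * B) * w s" .
  qed
  then show ?thesis
    using le_one_plus_sq[of "norm (x t)"] by (simp add: w_def power2_norm_eq_inner mult.commute)
qed

lemma norm_diff_le_of_linear_growth:
  assumes t: "t \<in> {a..b}"
  shows "norm (x t - x a) \<le> (b - a) * (A + B * ((1 + (norm (x a))\<^sup>2) * exp ((A + 2 * B) * (b - a))))"
proof -
  let ?G = "A + B * ((1 + (norm (x a))\<^sup>2) * exp ((A + 2 * B) * (b - a)))"
  have "norm (x t - x a) \<le> ?G * norm (t - a)"
  proof (rule differentiable_bound[of "{a..b}"])
    fix s assume s: "s \<in> {a..b}"
    show "(x has_derivative (\<lambda>h. h *\<^sub>R x' s)) (at s within {a..b})"
      using deriv[OF s] by (simp add: has_vector_derivative_def)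
    have "norm (x s) \<le> (1 + (norm (x a))\<^sup>2) * exp ((A + 2 * B) * (b - a))"
      using norm_le_of_linear_growth[OF s] s A B
      by (elim order_trans, intro mult_left_mono) (auto intro!: mult_left_mono)
    then show "onorm (\<lambda>h. h *\<^sub>R x' s) \<le> ?G"
      using growth[OF s] B onorm_scaleR_left[OF bounded_linear_ident, of "x' s"]
      by (simp add: onorm_id) (meson add_left_mono mult_left_mono order_trans)
  qed (use t in auto)
  also have "\<dots> \<le> ?G * (b - a)"
    using t A B by (intro mult_left_mono) auto
  finally show ?thesis
    by (simp add: mult.commute)
qed

end

lemma scaled_flow_displacement_le:
  fixes x :: "real \<Rightarrow> 'a::real_inner"
  assumes ode: "\<And>t. t \<in> {a..a + T} \<Longrightarrow> (x has_vector_derivative \<alpha> *\<^sub>R f t (x t)) (at t within {a..a + T})"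
    and growth: "\<And>t y. t \<in> {a..a + T} \<Longrightarrow> norm (f t y) \<le> A + B * norm y"
    and "0 \<le> A" "0 \<le> B" "0 < \<alpha>" "\<alpha> \<le> \<alpha>0" "0 \<le> T" "norm (x a) \<le> R"
    and t: "t \<in> {a..a + T}"
  shows "norm (x t - x a) \<le> \<alpha> * T * (A + B * ((1 + R\<^sup>2) * exp (\<alpha>0 * (A + 2 * B) * T)))"
proof -
  have "norm (\<alpha> *\<^sub>R f s (x s)) \<le> \<alpha> * A + \<alpha> * B * norm (x s)" if "s \<in> {a..a + T}" for s
    using mult_left_mono[OF growth[OF that, of "x s"], of \<alpha>] assms by (simp add: algebra_simps)
  from norm_diff_le_of_linear_growth[OF ode this _ _ t] assms
  have "norm (x t - x a) \<le> T * (\<alpha> * A + \<alpha> * B * ((1 + (norm (x a))\<^sup>2) * exp ((\<alpha> * A + 2 * (\<alpha> * B)) * T)))"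
    by simp
  also have "\<dots> \<le> T * (\<alpha> * A + \<alpha> * B * ((1 + R\<^sup>2) * exp (\<alpha>0 * (A + 2 * B) * T)))"
  proof -
    have "\<alpha> * (A + 2 * B) * T \<le> \<alpha>0 * (A + 2 * B) * T"
      using assms by (intro mult_right_mono) auto
    then have "(\<alpha> * A + 2 * (\<alpha> * B)) * T \<le> \<alpha>0 * (A + 2 * B) * T"
      by (simp add: algebra_simps)
    moreover have "(norm (x a))\<^sup>2 \<le> R\<^sup>2"
      using assms by (simp add: power_mono)
    ultimately show ?thesis
      using assms by (simp add: mult_mono add_mono mult_left_mono)
  qed
  finally show ?thesis
    by (simp add: algebra_simps)
qed

section \<open>Central differences\<close>

lemma lipschitz_on_UNIV_norm_le:
  assumes "L-lipschitz_on UNIV f"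
  shows "norm (f z) \<le> norm (f 0) + L * norm z"
  using lipschitz_on_normD[OF assms, of z 0] norm_triangle_ineq2[of "f z" "f 0"] by simp

context
  fixes F :: "'a::real_inner \<Rightarrow> real" and gradF :: "'a \<Rightarrow> 'a"
  assumes F_deriv: "\<forall>x. (F has_derivative (\<lambda>h. gradF x \<bullet> h)) (at x)"
begin

lemma has_real_derivative_along_line:
  "((\<lambda>s. F (y + s *\<^sub>R h)) has_real_derivative gradF (y + s *\<^sub>R h) \<bullet> h) (at s within S)"
proof -
  have "((\<lambda>s. y + s *\<^sub>R h) has_derivative (\<lambda>s. s *\<^sub>R h)) (at s within S)"
    by (auto intro!: derivative_eq_intros)
  from has_derivative_compose[OF this, of F "\<lambda>k. gradF (y + s *\<^sub>R h) \<bullet> k"] F_deriv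
  have "((\<lambda>s. F (y + s *\<^sub>R h)) has_derivative (\<lambda>u. gradF (y + s *\<^sub>R h) \<bullet> (u *\<^sub>R h))) (at s within S)"
    by (simp add: o_def has_derivative_at_withinI)
  then show ?thesis
    unfolding has_field_derivative_def by (rule has_derivative_eq_rhs) (auto simp: fun_eq_iff)
qed

lemma central_difference_bound:
  assumes Lg: "Lg-lipschitz_on UNIV gradF"
  shows "\<bar>F (y + h) - F (y - h)\<bar> \<le> 2 * norm h * (norm (gradF 0) + Lg * (norm y + norm h))"
proof -
  let ?z = "\<lambda>s. (y - h) + s *\<^sub>R (2 *\<^sub>R h)"
  have grad_bound: "norm (gradF (?z s)) \<le> norm (gradF 0) + Lg * (norm y + norm h)"
    if "s \<in> {0..1}" for s
  proof -
    have "norm (?z s) = norm (y + (2 * s - 1) *\<^sub>R h)"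
      by (simp add: algebra_simps)
    also have "\<dots> \<le> norm y + norm h"
      using that by (intro order_trans[OF norm_triangle_ineq]) (auto intro: mult_left_le_one_le)
    finally show ?thesis
      using lipschitz_on_UNIV_norm_le[OF Lg, of "?z s"] lipschitz_on_nonneg[OF Lg]
      by (meson add_left_mono mult_left_mono order_trans)
  qed
  have "norm (F (?z 1) - F (?z 0)) \<le> (norm (gradF 0) + Lg * (norm y + norm h)) * norm (2 *\<^sub>R h) * norm (1 - 0::real)"
  proof (rule field_differentiable_bound[of "{0..1}" "\<lambda>s. F (?z s)"])
    show "((\<lambda>s. F (?z s)) has_field_derivative gradF (?z s) \<bullet> (2 *\<^sub>R h)) (at s within {0..1})" for s
      by (rule has_real_derivative_along_line)
    fix s :: real assume s: "s \<in> {0..1}"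
    show "norm (gradF (?z s) \<bullet> (2 *\<^sub>R h)) \<le> (norm (gradF 0) + Lg * (norm y + norm h)) * norm (2 *\<^sub>R h)"
      unfolding real_norm_def
      using Cauchy_Schwarz_ineq2[of "gradF (?z s)" "2 *\<^sub>R h"]
        mult_right_mono[OF grad_bound[OF s] norm_ge_zero[of "2 *\<^sub>R h"]]
      by (rule order_trans)
  qed auto
  then show ?thesis
    by (simp add: algebra_simps) (simp add: scaleR_2 algebra_simps)
qed

lemma central_difference_lipschitz:
  assumes Lg: "Lg-lipschitz_on UNIV gradF"
  shows "\<bar>(F (y1 + h) - F (y1 - h)) - (F (y2 + h) - F (y2 - h))\<bar> \<le> 2 * Lg * norm h * norm (y1 - y2)"
proof -
  let ?d = "y1 - y2"
  let ?g = "\<lambda>s. F ((y2 + h) + s *\<^sub>R ?d) - F ((y2 - h) + s *\<^sub>R ?d)"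
  have "norm (?g 1 - ?g 0) \<le> 2 * Lg * norm h * norm ?d * norm (1 - 0::real)"
  proof (rule field_differentiable_bound[of "{0..1}" ?g])
    fix s :: real
    show "(?g has_field_derivative gradF ((y2 + h) + s *\<^sub>R ?d) \<bullet> ?d - gradF ((y2 - h) + s *\<^sub>R ?d) \<bullet> ?d)
        (at s within {0..1})"
      by (intro DERIV_diff has_real_derivative_along_line)
    have "norm (gradF ((y2 + h) + s *\<^sub>R ?d) \<bullet> ?d - gradF ((y2 - h) + s *\<^sub>R ?d) \<bullet> ?d)
        \<le> norm (gradF ((y2 + h) + s *\<^sub>R ?d) - gradF ((y2 - h) + s *\<^sub>R ?d)) * norm ?d"
      by (metis Cauchy_Schwarz_ineq2 inner_diff_left real_norm_def)
    also have "\<dots> \<le> Lg * norm (2 *\<^sub>R h) * norm ?d"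
      using lipschitz_on_normD[OF Lg, of "(y2 + h) + s *\<^sub>R ?d" "(y2 - h) + s *\<^sub>R ?d"]
      by (intro mult_right_mono) (auto simp: algebra_simps scaleR_2)
    finally show "norm (gradF ((y2 + h) + s *\<^sub>R ?d) \<bullet> ?d - gradF ((y2 - h) + s *\<^sub>R ?d) \<bullet> ?d)
        \<le> 2 * Lg * norm h * norm ?d"
      by simp
  qed auto
  then show ?thesis
    by (simp add: algebra_simps)
qed

end

section \<open>The two-point gradient estimate\<close>

lemma norm_matrix_vector_mult_le:
  fixes A :: "real^'n^'m"
  shows "norm (A *v x) \<le> norm A * norm x"
proof (rule power2_le_imp_le)
  have norm_sq: "(norm v)\<^sup>2 = (\<Sum>i\<in>UNIV. (norm (v $ i))\<^sup>2)" for v :: "'b::real_normed_vector^'m"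
    by (simp add: norm_vec_def L2_set_def sum_nonneg)
  have row: "(A *v x) $ i = A $ i \<bullet> x" for i
    by (simp add: matrix_vector_mult_def inner_vec_def mult.commute)
  have "(norm (A *v x))\<^sup>2 = (\<Sum>i\<in>UNIV. (A $ i \<bullet> x)\<^sup>2)"
    by (simp add: norm_sq row)
  also have "\<dots> \<le> (\<Sum>i\<in>UNIV. (norm (A $ i))\<^sup>2 * (norm x)\<^sup>2)"
    unfolding power_mult_distrib[symmetric]
    by (intro sum_mono) (metis Cauchy_Schwarz_ineq2 abs_ge_zero power2_abs power_mono)
  also have "\<dots> = (norm A * norm x)\<^sup>2"
    by (simp add: power_mult_distrib sum_distrib_right norm_sq[of A])
  finally show "(norm (A *v x))\<^sup>2 \<le> (norm A * norm x)\<^sup>2" .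
qed simp

context
  fixes F :: "real^'n \<Rightarrow> real" and gradF :: "real^'n \<Rightarrow> real^'n"
  assumes F_deriv: "\<forall>x. (F has_derivative (\<lambda>h. gradF x \<bullet> h)) (at x)"
begin

lemma norm_efd_beta_le:
  assumes Lg: "Lg-lipschitz_on UNIV gradF" and "0 < \<epsilon>" "\<epsilon> \<le> 1"
  shows "norm (efd_beta F \<xi> \<epsilon> t y) \<le> (norm (\<xi> t))\<^sup>2 * (norm (gradF 0) + Lg * (norm y + norm (\<xi> t)))"
proof -
  let ?v = "\<xi> t"
  have "\<bar>F (y + \<epsilon> *\<^sub>R ?v) - F (y - \<epsilon> *\<^sub>R ?v)\<bar> \<le> 2 * (\<epsilon> * norm ?v) * (norm (gradF 0) + Lg * (norm y + \<epsilon> * norm ?v))"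
    using central_difference_bound[OF F_deriv Lg, of y "\<epsilon> *\<^sub>R ?v"] assms by simp
  also have "\<dots> \<le> 2 * (\<epsilon> * norm ?v) * (norm (gradF 0) + Lg * (norm y + norm ?v))"
    using assms lipschitz_on_nonneg[OF Lg]
    by (intro mult_left_mono add_left_mono) (auto intro: mult_left_le_one_le)
  finally have "\<bar>F (y + \<epsilon> *\<^sub>R ?v) - F (y - \<epsilon> *\<^sub>R ?v)\<bar> / (2 * \<epsilon>) * norm ?v
      \<le> 2 * (\<epsilon> * norm ?v) * (norm (gradF 0) + Lg * (norm y + norm ?v)) / (2 * \<epsilon>) * norm ?v"
    using assms by (intro mult_right_mono divide_right_mono) auto
  then show ?thesis
    using assms by (simp add: efd_beta_def abs_mult power2_eq_square field_simps)
qed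

lemma efd_beta_lipschitz:
  assumes Lg: "Lg-lipschitz_on UNIV gradF" and "0 < \<epsilon>"
  shows "norm (efd_beta F \<xi> \<epsilon> t y1 - efd_beta F \<xi> \<epsilon> t y2) \<le> Lg * (norm (\<xi> t))\<^sup>2 * norm (y1 - y2)"
proof -
  let ?v = "\<xi> t"
  let ?\<Delta> = "\<lambda>y. F (y + \<epsilon> *\<^sub>R ?v) - F (y - \<epsilon> *\<^sub>R ?v)"
  have "efd_beta F \<xi> \<epsilon> t y1 - efd_beta F \<xi> \<epsilon> t y2 = - ((?\<Delta> y1 - ?\<Delta> y2) / (2 * \<epsilon>)) *\<^sub>R ?v"
    unfolding efd_beta_def scaleR_left_diff_distrib[symmetric]
    by (rule arg_cong[where f = "\<lambda>c. c *\<^sub>R ?v"]) (use assms in \<open>simp add: field_simps\<close>)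
  then have "norm (efd_beta F \<xi> \<epsilon> t y1 - efd_beta F \<xi> \<epsilon> t y2) = \<bar>?\<Delta> y1 - ?\<Delta> y2\<bar> / (2 * \<epsilon>) * norm ?v"
    using assms by simp
  also have "\<dots> \<le> 2 * Lg * (\<epsilon> * norm ?v) * norm (y1 - y2) / (2 * \<epsilon>) * norm ?v"
    using central_difference_lipschitz[OF F_deriv Lg, of y1 "\<epsilon> *\<^sub>R ?v" y2] assms
    by (intro mult_right_mono divide_right_mono) auto
  also have "\<dots> = Lg * (norm ?v)\<^sup>2 * norm (y1 - y2)"
    using assms by (simp add: power2_eq_square field_simps)
  finally show ?thesis .
qed

lemma norm_efd_beta_le_affine:
  assumes Lg: "Lg-lipschitz_on UNIV gradF" and "0 < \<epsilon>" "\<epsilon> \<le> 1" and M: "\<And>t. norm (\<xi> t) \<le> M"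
  shows "norm (efd_beta F \<xi> \<epsilon> t y) \<le> M\<^sup>2 * (norm (gradF 0) + Lg * M) + Lg * M\<^sup>2 * norm y"
proof -
  have "(norm (\<xi> t))\<^sup>2 * (norm (gradF 0) + Lg * (norm y + norm (\<xi> t))) \<le> M\<^sup>2 * (norm (gradF 0) + Lg * (norm y + M))"
    using M[of t] lipschitz_on_nonneg[OF Lg] by (intro mult_mono power_mono add_left_mono mult_left_mono) auto
  then show ?thesis
    using norm_efd_beta_le[OF Lg \<open>0 < \<epsilon>\<close> \<open>\<epsilon> \<le> 1\<close>, of \<xi> t y] by (simp add: algebra_simps)
qed

context
  fixes hessF :: "real^'n \<Rightarrow> real^'n^'n"
  assumes grad_deriv: "\<forall>x. (gradF has_derivative (\<lambda>h. hessF x *v h)) (at x)"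
begin

lemma has_real_derivative_inner_gradient_along_line:
  "((\<lambda>s. gradF (y + s *\<^sub>R h) \<bullet> v) has_real_derivative (hessF (y + s *\<^sub>R h) *v h) \<bullet> v) (at s within S)"
proof -
  have "((\<lambda>s. y + s *\<^sub>R h) has_derivative (\<lambda>s. s *\<^sub>R h)) (at s within S)"
    by (auto intro!: derivative_eq_intros)
  from has_derivative_compose[OF this, of gradF "\<lambda>k. hessF (y + s *\<^sub>R h) *v k"] grad_deriv
  have "((\<lambda>s. gradF (y + s *\<^sub>R h)) has_derivative (\<lambda>u. hessF (y + s *\<^sub>R h) *v (u *\<^sub>R h))) (at s within S)"
    by (simp add: o_def has_derivative_at_withinI)
  from has_derivative_inner_left[OF this, of v] show ?thesis
    unfolding has_field_derivative_def
    by (rule has_derivative_eq_rhs) (auto simp: fun_eq_iff matrix_vector_mult_scaleR)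
qed

lemma gradient_central_sum_deviation_le:
  assumes LH: "LH-lipschitz_on UNIV hessF" and s: "s \<in> {0..1}"
  shows "\<bar>gradF (y + s *\<^sub>R h) \<bullet> h + gradF (y + s *\<^sub>R (-h)) \<bullet> h - 2 * (gradF y \<bullet> h)\<bar> \<le> 2 * LH * norm h ^ 3"
proof -
  define \<phi> where "\<phi> r = gradF (y + r *\<^sub>R h) \<bullet> h + gradF (y + r *\<^sub>R (-h)) \<bullet> h" for r
  have "norm (\<phi> s - \<phi> 0) \<le> 2 * LH * norm h ^ 3 * norm (s - 0)"
  proof (rule field_differentiable_bound[of "{0..1}" \<phi>])
    fix r :: real
    show "(\<phi> has_field_derivative ((hessF (y + r *\<^sub>R h) - hessF (y + r *\<^sub>R (-h))) *v h) \<bullet> h)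
        (at r within {0..1})"
      unfolding \<phi>_def
      using DERIV_add[OF has_real_derivative_inner_gradient_along_line[of y h h r]
          has_real_derivative_inner_gradient_along_line[of y "-h" h r]]
      using matrix_vector_mult_diff_distrib[of "hessF (y + r *\<^sub>R (-h))" 0 h]
      by (simp add: matrix_vector_mult_diff_rdistrib inner_diff_left)
    assume r: "r \<in> {0..1}"
    have "norm (((hessF (y + r *\<^sub>R h) - hessF (y + r *\<^sub>R (-h))) *v h) \<bullet> h)
        \<le> norm (hessF (y + r *\<^sub>R h) - hessF (y + r *\<^sub>R (-h))) * norm h * norm h"
      unfolding real_norm_def
      using Cauchy_Schwarz_ineq2 mult_right_mono[OF norm_matrix_vector_mult_le norm_ge_zero]
      by (rule order_trans)
    also have "\<dots> \<le> LH * norm ((y + r *\<^sub>R h) - (y + r *\<^sub>R (-h))) * norm h * norm h"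
      by (intro mult_right_mono lipschitz_on_normD[OF LH]) auto
    also have "\<dots> = r * (2 * LH * norm h ^ 3)"
      using r by (simp add: power3_eq_cube algebra_simps flip: scaleR_2)
    also have "\<dots> \<le> 2 * LH * norm h ^ 3"
      using r lipschitz_on_nonneg[OF LH] by (intro mult_left_le_one_le) auto
    finally show "norm (((hessF (y + r *\<^sub>R h) - hessF (y + r *\<^sub>R (-h))) *v h) \<bullet> h) \<le> 2 * LH * norm h ^ 3" .
  qed (use s in auto)
  also have "\<dots> \<le> 2 * LH * norm h ^ 3"
    using s lipschitz_on_nonneg[OF LH] by (intro mult_right_le_one_le) auto
  finally show ?thesis
    by (simp add: \<phi>_def)
qed

lemma central_difference_taylor_bound:
  assumes LH: "LH-lipschitz_on UNIV hessF"
  shows "\<bar>F (y + h) - F (y - h) - 2 * (gradF y \<bullet> h)\<bar> \<le> 2 * LH * norm h ^ 3"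
proof -
  define g where "g s = F (y + s *\<^sub>R h) - F (y + s *\<^sub>R (-h)) - 2 * s * (gradF y \<bullet> h)" for s
  have "norm (g 1 - g 0) \<le> 2 * LH * norm h ^ 3 * norm (1 - 0 :: real)"
  proof (rule field_differentiable_bound[of "{0..1}" g])
    show "(g has_field_derivative gradF (y + s *\<^sub>R h) \<bullet> h + gradF (y + s *\<^sub>R (-h)) \<bullet> h - 2 * (gradF y \<bullet> h))
        (at s within {0..1})" for s
      unfolding g_def
      using DERIV_diff[OF DERIV_diff[OF has_real_derivative_along_line[OF F_deriv, of y h s]
            has_real_derivative_along_line[OF F_deriv, of y "-h" s]]
          DERIV_cmult_right[OF DERIV_cmult[OF DERIV_ident, of 2], of "gradF y \<bullet> h"]]
      by simp
  qed (use gradient_central_sum_deviation_le[OF LH] in auto)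
  then show ?thesis
    by (simp add: g_def)
qed

lemma norm_efd_beta_gradient_bias_le:
  assumes LH: "LH-lipschitz_on UNIV hessF" and "0 < \<epsilon>"
  shows "norm (efd_beta F \<xi> \<epsilon> t y + (gradF y \<bullet> \<xi> t) *\<^sub>R \<xi> t) \<le> LH * \<epsilon>\<^sup>2 * norm (\<xi> t) ^ 4"
proof -
  let ?v = "\<xi> t"
  let ?r = "F (y + \<epsilon> *\<^sub>R ?v) - F (y - \<epsilon> *\<^sub>R ?v) - 2 * (gradF y \<bullet> (\<epsilon> *\<^sub>R ?v))"
  have "efd_beta F \<xi> \<epsilon> t y + (gradF y \<bullet> ?v) *\<^sub>R ?v = - (?r / (2 * \<epsilon>)) *\<^sub>R ?v"
    unfolding efd_beta_def scaleR_left_distrib[symmetric]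
    by (rule arg_cong[where f = "\<lambda>c. c *\<^sub>R ?v"]) (use assms in \<open>simp add: field_simps\<close>)
  then have "norm (efd_beta F \<xi> \<epsilon> t y + (gradF y \<bullet> ?v) *\<^sub>R ?v) = \<bar>?r\<bar> / (2 * \<epsilon>) * norm ?v"
    using assms by simp
  also have "\<dots> \<le> 2 * LH * (\<epsilon> * norm ?v) ^ 3 / (2 * \<epsilon>) * norm ?v"
    using central_difference_taylor_bound[OF LH, of y "\<epsilon> *\<^sub>R ?v"] assms
    by (intro mult_right_mono divide_right_mono) auto
  also have "\<dots> = LH * \<epsilon>\<^sup>2 * norm ?v ^ 4"
    using assms by (simp add: power2_eq_square power3_eq_cube power4_eq_xxxx field_simps)
  finally show ?thesis .
qed

end

end

section \<open>Averaging over one period\<close>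

lemma periodic_continuous_bounded:
  fixes \<xi> :: "real \<Rightarrow> 'a::real_normed_vector"
  assumes "continuous_on UNIV \<xi>" "T > 0" "\<forall>t. \<xi> (t + T) = \<xi> t"
  obtains M where "\<And>t. norm (\<xi> t) \<le> M"
proof -
  have shift: "\<xi> (t + real n * T) = \<xi> t" for t n
  proof (induction n)
    case (Suc n)
    have "\<xi> (t + real (Suc n) * T) = \<xi> ((t + real n * T) + T)"
      by (simp add: algebra_simps)
    then show ?case
      using assms(3) Suc by simp
  qed simp
  have reduce: "\<xi> t = \<xi> (t - of_int k * T)" for t k
  proof (cases k rule: int_cases)
    case (nonneg n)
    then show ?thesis using shift[of "t - real n * T" n] by simp
  next
    case (neg n)
    then have k: "of_int k = - real (Suc n)"
      by simp
    have "t - of_int k * T = t + real (Suc n) * T"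
      unfolding k by (simp add: algebra_simps)
    then show ?thesis
      by (simp only: shift)
  qed
  obtain M where M: "\<forall>s\<in>{0..T}. norm (\<xi> s) \<le> M"
    using compact_imp_bounded[OF compact_continuous_image[OF continuous_on_subset[OF assms(1)], of "{0..T}"]]
    by (auto simp: bounded_iff)
  have "t - of_int \<lfloor>t / T\<rfloor> * T \<in> {0..T}" for t
    using floor_divide_lower[OF \<open>T > 0\<close>, of t] floor_divide_upper[OF \<open>T > 0\<close>, of t]
    by (auto simp: algebra_simps)
  then have "norm (\<xi> t) \<le> M" for t
    using M reduce[of t "\<lfloor>t / T\<rfloor>"] by simp
  then show ?thesis using that by blast
qed

lemma outer_self_mult_vec: "outer u u *v g = (g \<bullet> u) *\<^sub>R (u :: real^'n)"
  by (simp add: vec_eq_iff outer_def matrix_vector_mult_def inner_vec_def sum_distrib_left mult_ac)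

lemma integral_inner_scaleR_self_eq:
  fixes \<xi> :: "real \<Rightarrow> real^'n"
  assumes "T > 0" and pe: "(1 / T) *\<^sub>R integral {a..a + T} (\<lambda>\<tau>. outer (\<xi> \<tau>) (\<xi> \<tau>)) = mat 1"
  shows "integral {a..a + T} (\<lambda>\<tau>. (g \<bullet> \<xi> \<tau>) *\<^sub>R \<xi> \<tau>) = T *\<^sub>R g"
proof -
  let ?O = "\<lambda>\<tau>. outer (\<xi> \<tau>) (\<xi> \<tau>)"
  have "(mat 1 :: real^'n^'n) $ i $ i \<noteq> 0 $ i $ i" for i
    by (simp add: mat_def)
  then have "integral {a..a + T} ?O \<noteq> 0"
    using pe by force
  \<comment> \<open>A non-integrable function has integral 0, so the excitation condition forces integrability.\<close>
  then have "?O integrable_on {a..a + T}"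
    using not_integrable_integral by blast
  have "integral {a..a + T} (\<lambda>\<tau>. (g \<bullet> \<xi> \<tau>) *\<^sub>R \<xi> \<tau>) = integral {a..a + T} ((\<lambda>A. A *v g) \<circ> ?O)"
    by (simp add: o_def outer_self_mult_vec)
  also have "\<dots> = integral {a..a + T} ?O *v g"
  proof (rule integral_linear[OF \<open>?O integrable_on _\<close>])
    show "bounded_linear (\<lambda>A :: real^'n^'n. A *v g)"
      unfolding linear_conv_bounded_linear[symmetric]
      by (rule linearI) (simp_all add: vec_eq_iff matrix_vector_mult_def sum_distrib_left algebra_simps sum.distrib)
  qed
  also have "integral {a..a + T} ?O = T *\<^sub>R mat 1"
    using arg_cong[OF pe, of "scaleR T"] \<open>T > 0\<close> by simp
  finally show ?thesis
    by (simp flip: scaleR_matrix_vector_assoc)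
qed

lemma continuous_on_efd_beta:
  fixes F :: "real^'n \<Rightarrow> real"
  assumes F_deriv: "\<forall>x. (F has_derivative (\<lambda>h. gradF x \<bullet> h)) (at x)"
    and "continuous_on S y" "continuous_on S \<xi>"
  shows "continuous_on S (\<lambda>t. efd_beta F \<xi> \<epsilon> t (y t))"
proof -
  have "continuous_on UNIV F"
    using F_deriv by (meson continuous_at_imp_continuous_on has_derivative_continuous)
  then have F_comp: "continuous_on S (\<lambda>t. F (f t))" if "continuous_on S f" for f
    using continuous_on_compose2[OF _ that] by blast
  show ?thesis
    unfolding efd_beta_def using assms(2,3) by (intro continuous_intros F_comp)
qed

lemma norm_integral_efd_beta_plus_gradient_le:
  fixes F :: "real^'n \<Rightarrow> real"
  assumes F_deriv: "\<forall>x. (F has_derivative (\<lambda>h. gradF x \<bullet> h)) (at x)"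
    and grad_deriv: "\<forall>x. (gradF has_derivative (\<lambda>h. hessF x *v h)) (at x)"
    and Lg: "Lg-lipschitz_on UNIV gradF" and LH: "LH-lipschitz_on UNIV hessF"
    and "T > 0" "0 < \<epsilon>"
    and xi_cont: "continuous_on {a..a + T} \<xi>" and xi_bound: "\<And>t. t \<in> {a..a + T} \<Longrightarrow> norm (\<xi> t) \<le> M"
    and pe: "(1 / T) *\<^sub>R integral {a..a + T} (\<lambda>\<tau>. outer (\<xi> \<tau>) (\<xi> \<tau>)) = mat 1"
    and y_cont: "continuous_on {a..a + T} y" and near: "\<And>t. t \<in> {a..a + T} \<Longrightarrow> norm (y t - y a) \<le> D"
  shows "norm (integral {a..a + T} (\<lambda>\<tau>. efd_beta F \<xi> \<epsilon> \<tau> (y \<tau>)) + T *\<^sub>R gradF (y a))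
           \<le> T * (Lg * M\<^sup>2 * D + LH * \<epsilon>\<^sup>2 * M ^ 4)"
proof -
  let ?I = "{a..a + T}"
  let ?\<beta> = "\<lambda>\<tau>. efd_beta F \<xi> \<epsilon> \<tau> (y \<tau>)"
  let ?\<beta>\<^sub>x = "\<lambda>\<tau>. efd_beta F \<xi> \<epsilon> \<tau> (y a)"
  let ?g = "\<lambda>\<tau>. (gradF (y a) \<bullet> \<xi> \<tau>) *\<^sub>R \<xi> \<tau>"
  have cont: "continuous_on ?I ?\<beta>" "continuous_on ?I ?\<beta>\<^sub>x" "continuous_on ?I ?g"
    using continuous_on_efd_beta[OF F_deriv y_cont xi_cont] continuous_on_efd_beta[OF F_deriv continuous_on_const xi_cont]
    by (auto intro!: continuous_on_scaleR continuous_on_inner continuous_on_const xi_cont)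
  then have int: "?\<beta> integrable_on ?I" "?\<beta>\<^sub>x integrable_on ?I" "?g integrable_on ?I"
    by (auto intro: integrable_continuous_interval)
  have bound_drift: "norm (integral ?I (\<lambda>\<tau>. ?\<beta> \<tau> - ?\<beta>\<^sub>x \<tau>)) \<le> Lg * M\<^sup>2 * D * (a + T - a)"
  proof (rule integral_bound)
    fix \<tau> assume \<tau>: "\<tau> \<in> ?I"
    show "norm (?\<beta> \<tau> - ?\<beta>\<^sub>x \<tau>) \<le> Lg * M\<^sup>2 * D"
      using efd_beta_lipschitz[OF F_deriv Lg \<open>0 < \<epsilon>\<close>, of \<xi> \<tau> "y \<tau>" "y a"]
        xi_bound[OF \<tau>] near[OF \<tau>] lipschitz_on_nonneg[OF Lg]
      by (elim order_trans) (intro mult_mono mult_left_mono power_mono; simp)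
  qed (use \<open>T > 0\<close> cont in \<open>auto intro: continuous_on_diff continuous_on_add\<close>)
  have bound_bias: "norm (integral ?I (\<lambda>\<tau>. ?\<beta>\<^sub>x \<tau> + ?g \<tau>)) \<le> LH * \<epsilon>\<^sup>2 * M ^ 4 * (a + T - a)"
  proof (rule integral_bound)
    fix \<tau> assume \<tau>: "\<tau> \<in> ?I"
    show "norm (?\<beta>\<^sub>x \<tau> + ?g \<tau>) \<le> LH * \<epsilon>\<^sup>2 * M ^ 4"
      using norm_efd_beta_gradient_bias_le[OF F_deriv grad_deriv LH \<open>0 < \<epsilon>\<close>, of \<xi> \<tau> "y a"]
        xi_bound[OF \<tau>] lipschitz_on_nonneg[OF LH]
      by (elim order_trans) (intro mult_left_mono power_mono; simp)
  qed (use \<open>T > 0\<close> cont in \<open>auto intro: continuous_on_diff continuous_on_add\<close>)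
  have "integral ?I ?\<beta> + T *\<^sub>R gradF (y a)
      = integral ?I (\<lambda>\<tau>. ?\<beta> \<tau> - ?\<beta>\<^sub>x \<tau>) + integral ?I (\<lambda>\<tau>. ?\<beta>\<^sub>x \<tau> + ?g \<tau>)"
    using integral_diff[OF int(1,2)] integral_add[OF int(2,3)]
      integral_inner_scaleR_self_eq[OF \<open>T > 0\<close> pe, of "gradF (y a)"]
    by simp
  also have "norm \<dots> \<le> Lg * M\<^sup>2 * D * T + LH * \<epsilon>\<^sup>2 * M ^ 4 * T"
    using bound_drift bound_bias by (intro order_trans[OF norm_triangle_ineq add_mono]) simp_all
  also have "\<dots> = T * (Lg * M\<^sup>2 * D + LH * \<epsilon>\<^sup>2 * M ^ 4)"
    by (simp add: algebra_simps)
  finally show ?thesis .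
qed

lemma efd_flow_period_step:
  fixes F :: "real^'n \<Rightarrow> real"
  assumes F_deriv: "\<forall>x. (F has_derivative (\<lambda>h. gradF x \<bullet> h)) (at x)"
    and grad_deriv: "\<forall>x. (gradF has_derivative (\<lambda>h. hessF x *v h)) (at x)"
    and Lg: "Lg-lipschitz_on UNIV gradF" and LH: "LH-lipschitz_on UNIV hessF"
    and T: "T > 0" and \<epsilon>: "0 < \<epsilon>"
    and xi_cont: "continuous_on {a..a + T} \<xi>" and xi_bound: "\<And>t. t \<in> {a..a + T} \<Longrightarrow> norm (\<xi> t) \<le> M"
    and pe: "(1 / T) *\<^sub>R integral {a..a + T} (\<lambda>\<tau>. outer (\<xi> \<tau>) (\<xi> \<tau>)) = mat 1"
    and growth: "\<And>t y. t \<in> {a..a + T} \<Longrightarrow> norm (efd_beta F \<xi> \<epsilon> t y) \<le> A + B * norm y"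
    and AB: "0 \<le> A" "0 \<le> B"
    and \<alpha>: "0 < \<alpha>" "\<alpha> \<le> \<alpha>0" and start: "norm (x a) \<le> R"
    and ode: "\<And>t. t \<in> {a..a + T} \<Longrightarrow> (x has_vector_derivative \<alpha> *\<^sub>R efd_beta F \<xi> \<epsilon> t (x t)) (at t within {a..a + T})"
  shows "\<exists>s. norm s \<le> (Lg * M\<^sup>2 * T * (A + B * ((1 + R\<^sup>2) * exp (\<alpha>0 * (A + 2 * B) * T))) + LH * M ^ 4) * (\<alpha> + \<epsilon>\<^sup>2)
           \<and> x a + \<alpha> *\<^sub>R integral {a..a + T} (\<lambda>\<tau>. efd_beta F \<xi> \<epsilon> \<tau> (x \<tau>)) = x a - (\<alpha> * T) *\<^sub>R (gradF (x a) + s)"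
proof -
  define G where "G = A + B * ((1 + R\<^sup>2) * exp (\<alpha>0 * (A + 2 * B) * T))"
  define J where "J = integral {a..a + T} (\<lambda>\<tau>. efd_beta F \<xi> \<epsilon> \<tau> (x \<tau>))"
  have "continuous_on {a..a + T} x"
    using ode by (meson continuous_on_eq_continuous_within has_vector_derivative_continuous)
  moreover have "norm (x t - x a) \<le> \<alpha> * T * G" if "t \<in> {a..a + T}" for t
    unfolding G_def using scaled_flow_displacement_le[OF ode growth AB \<alpha> _ start that] T by simp
  ultimately have estimate: "norm (J + T *\<^sub>R gradF (x a)) \<le> T * (Lg * M\<^sup>2 * (\<alpha> * T * G) + LH * \<epsilon>\<^sup>2 * M ^ 4)"
    unfolding J_def
    using norm_integral_efd_beta_plus_gradient_le[OF F_deriv grad_deriv Lg LH T \<epsilon> xi_cont xi_bound pe,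
          where y = x and D = "\<alpha> * T * G"]
    by blast
  define s where "s = - (1 / T) *\<^sub>R (J + T *\<^sub>R gradF (x a))"
  have "norm s = norm (J + T *\<^sub>R gradF (x a)) / T"
    using T by (simp add: s_def)
  also have "\<dots> \<le> Lg * M\<^sup>2 * T * G * \<alpha> + LH * M ^ 4 * \<epsilon>\<^sup>2"
    using estimate T by (simp add: pos_divide_le_eq algebra_simps)
  also have "\<dots> \<le> (Lg * M\<^sup>2 * T * G + LH * M ^ 4) * (\<alpha> + \<epsilon>\<^sup>2)"
  proof -
    have "0 \<le> Lg * M\<^sup>2 * T * G * \<epsilon>\<^sup>2" "0 \<le> LH * M ^ 4 * \<alpha>"
      using AB T \<alpha> lipschitz_on_nonneg[OF Lg] lipschitz_on_nonneg[OF LH] by (simp_all add: G_def)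
    then show ?thesis
      by (simp add: algebra_simps)
  qed
  finally have "norm s \<le> (Lg * M\<^sup>2 * T * G + LH * M ^ 4) * (\<alpha> + \<epsilon>\<^sup>2)" .
  moreover have "x a + \<alpha> *\<^sub>R J = x a - (\<alpha> * T) *\<^sub>R (gradF (x a) + s)"
    using T by (simp add: s_def algebra_simps)
  ultimately show ?thesis
    unfolding G_def J_def by blast
qed

theorem lemma2:
  fixes F :: "real^'n \<Rightarrow> real"
    and gradF :: "real^'n \<Rightarrow> real^'n"
    and hessF :: "real^'n \<Rightarrow> real^'n^'n"
    and \<xi> :: "real \<Rightarrow> real^'n"
    and T :: real
  assumes F_deriv: "\<forall>x. (F has_derivative (\<lambda>h. gradF x \<bullet> h)) (at x)"
    and grad_deriv: "\<forall>x. (gradF has_derivative (\<lambda>h. hessF x *v h)) (at x)"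
    and hess_C1: "\<exists>D3 :: real^'n \<Rightarrow> (real^'n, real^'n^'n) blinfun.
                    (\<forall>x. (hessF has_derivative blinfun_apply (D3 x)) (at x)) \<and> continuous_on UNIV D3"
    and grad_lip: "\<exists>L. L-lipschitz_on UNIV gradF"
    and hess_lip: "\<exists>L. L-lipschitz_on UNIV hessF"
    and T_pos: "T > 0"
    and xi_cont: "continuous_on UNIV \<xi>"
    and xi_per: "\<forall>t. \<xi> (t + T) = \<xi> t"
    and xi_pe: "\<forall>t. (1 / T) *\<^sub>R integral {t..t + T} (\<lambda>\<tau>. outer (\<xi> \<tau>) (\<xi> \<tau>)) = mat 1"
  shows "\<forall>R>0. \<forall>\<alpha>0>0. \<exists>C. \<forall>(K::nat) \<alpha> \<epsilon> x (xs :: real \<Rightarrow> real^'n).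
           norm x \<le> R \<and> 0 < \<alpha> \<and> \<alpha> \<le> \<alpha>0 \<and> 0 < \<epsilon> \<and> \<epsilon> \<le> 1 \<and>
           xs (real K * T) = x \<and>
           (\<forall>t\<in>{real K * T .. real (Suc K) * T}.
              (xs has_vector_derivative (\<alpha> *\<^sub>R efd_beta F \<xi> \<epsilon> t (xs t)))
                (at t within {real K * T .. real (Suc K) * T}))
           \<longrightarrow> (\<exists>s. norm s \<le> C * (\<alpha> + \<epsilon>\<^sup>2) \<and>
                 (\<forall>X. X \<noteq> {} \<and> closed X \<and> convex X \<longrightarrow>
                    closest_point X (x + \<alpha> *\<^sub>R integral {real K * T .. real (Suc K) * T}
                                         (\<lambda>\<tau>. efd_beta F \<xi> \<epsilon> \<tau> (xs \<tau>)))
                    = closest_point X (x - (\<alpha> * T) *\<^sub>R (gradF x + s))))"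
proof -
  obtain Lg LH where Lg: "Lg-lipschitz_on UNIV gradF" and LH: "LH-lipschitz_on UNIV hessF"
    using grad_lip hess_lip by blast
  obtain M where M: "\<And>t. norm (\<xi> t) \<le> M"
    using periodic_continuous_bounded[OF xi_cont T_pos xi_per] by blast
  define A where "A = M\<^sup>2 * (norm (gradF 0) + Lg * M)"
  define B where "B = Lg * M\<^sup>2"
  define C where "C R \<alpha>0 = Lg * M\<^sup>2 * T * (A + B * ((1 + R\<^sup>2) * exp (\<alpha>0 * (A + 2 * B) * T))) + LH * M ^ 4" for R \<alpha>0
  have "0 \<le> M"
    using M[of 0] norm_ge_zero order_trans by blast
  then have AB: "0 \<le> A" "0 \<le> B"
    using lipschitz_on_nonneg[OF Lg] by (simp_all add: A_def B_def)
  have step: "\<exists>s. norm s \<le> C R \<alpha>0 * (\<alpha> + \<epsilon>\<^sup>2) \<and>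
                 (\<forall>X. X \<noteq> {} \<and> closed X \<and> convex X \<longrightarrow>
                    closest_point X (x + \<alpha> *\<^sub>R integral {real K * T .. real (Suc K) * T} (\<lambda>\<tau>. efd_beta F \<xi> \<epsilon> \<tau> (xs \<tau>)))
                    = closest_point X (x - (\<alpha> * T) *\<^sub>R (gradF x + s)))"
    if "norm x \<le> R" "0 < \<alpha>" "\<alpha> \<le> \<alpha>0" "0 < \<epsilon>" "\<epsilon> \<le> 1" "xs (real K * T) = x"
      and ode: "\<forall>t\<in>{real K * T .. real (Suc K) * T}.
              (xs has_vector_derivative (\<alpha> *\<^sub>R efd_beta F \<xi> \<epsilon> t (xs t))) (at t within {real K * T .. real (Suc K) * T})"
    for R \<alpha>0 :: real and K \<alpha> \<epsilon> x xs
  proof -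
    have period: "{real K * T .. real (Suc K) * T} = {real K * T .. real K * T + T}"
      by (simp add: algebra_simps)
    have growth: "norm (efd_beta F \<xi> \<epsilon> t y) \<le> A + B * norm y" for t y
      unfolding A_def B_def using norm_efd_beta_le_affine[OF F_deriv Lg \<open>0 < \<epsilon>\<close> \<open>\<epsilon> \<le> 1\<close> M] .
    show ?thesis
      using efd_flow_period_step[OF F_deriv grad_deriv Lg LH T_pos \<open>0 < \<epsilon>\<close> continuous_on_subset[OF xi_cont] M
          xi_pe[rule_format] growth AB \<open>0 < \<alpha>\<close> \<open>\<alpha> \<le> \<alpha>0\<close>, where x = xs and a = "real K * T" and R = R] ode that
      unfolding period C_def by auto
  qed
  show ?thesis
    using step by blast
qed

end
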